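(* For the $N$-relay 1-2-1 diamond network, in both the FD and HD cases, $\max_{p\in[1:N]}\mathsf C_p\ge\frac12\mathsf{C}_{\rm cs,iid}$ (with $\mathsf C_p$ and $\mathsf{C}_{\rm cs,iid}$ of the corresponding mode). Moreover the constant $\tfrac12$ is best possible in both modes: for every $\varepsilon>0$ there is a diamond network (with $N=2$) such that $\max_p\mathsf C_p\le(\tfrac12+\varepsilon)\mathsf{C}_{\rm cs,iid}$.
   Context: Diamond network: nodes $[0:N+1]$, source $0$, destination $N+1$, relays $[1:N]$; the only links are $(0,p)$ and $(p,N+1)$ for $p\in[1:N]$, with positive rational capacities $\ell_{p,0}$ and $\ell_{N+1,p}$; all other $\ell_{j,i}=0$. $\mathsf C_p=\min\{\ell_{p,0},\ell_{N+1,p}\}$ in FD and $\mathsf C_p=\frac{\ell_{p,0}\ell_{N+1,p}}{\ell_{p,0}+\ell_{N+1,p}}$ in HD. Network states: a state $s$ consists of sets $s_{i,t}\subseteq[1:N+1]\setminus\{i\}$ and $s_{i,r}\subseteq[0:N]\setminus\{i\}$, each of cardinality at most $1$, for $i\in[0:N+1]$, with $s_{0,r}=s_{N+1,t}=\emptyset$; in HD mode additionally $|s_{i,t}|+|s_{i,r}|\le1$ for $i\in[1:N]$. $\mathcal S$ is the set of all states of the mode. Link $(i,j)$ is active in $s$ if $j\in s_{i,t}$ and $i\in s_{j,r}$. $\mathsf{C}_{\rm cs,iid}=\max_{\lambda}\min_{\Omega}\sum_{i\in\Omega,\ j\in\Omega^c}\big(\sum_{s\in\mathcal S:\ (i,j)\text{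 active in }s}\lambda_s\big)\ell_{j,i}$, maximum over probability vectors $(\lambda_s)_{s\in\mathcal S}$, minimum over $\Omega$ with $0\in\Omega\subseteq[0:N]$, $\Omega^c=[0:N+1]\setminus\Omega$. *)

theory Defs
  imports Complex_Main
begin

datatype mode = FD | HD

text \<open>Diamond network with relays 1..N. a p = ell_{p,0} (source-to-relay p),
  b p = ell_{N+1,p} (relay p-to-destination). ell N a b j i is the capacity
  of the link from node i to node j (ell_{j,i} in the paper).\<close>
definition ell :: "nat \<Rightarrow> (nat \<Rightarrow> real) \<Rightarrow> (nat \<Rightarrow> real) \<Rightarrow> nat \<Rightarrow> nat \<Rightarrow> real" where
  "ell N a b j i =
     (if i = 0 \<and> 1 \<le> j \<and> j \<le> N then a j
      else if 1 \<le> i \<and> i \<le> N \<and> j = N + 1 then b i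
      else 0)"

definition valid_diamond :: "nat \<Rightarrow> (nat \<Rightarrow> real) \<Rightarrow> (nat \<Rightarrow> real) \<Rightarrow> bool" where
  "valid_diamond N a b \<longleftrightarrow> N \<ge> 1 \<and>
     (\<forall>p\<in>{1..N}. a p > 0 \<and> a p \<in> \<rat> \<and> b p > 0 \<and> b p \<in> \<rat>)"

definition Cp :: "mode \<Rightarrow> (nat \<Rightarrow> real) \<Rightarrow> (nat \<Rightarrow> real) \<Rightarrow> nat \<Rightarrow> real" where
  "Cp m a b p = (case m of
       FD \<Rightarrow> min (a p) (b p)
     | HD \<Rightarrow> a p * b p / (a p + b p))"

text \<open>A state is a pair (st, sr) with st i = s_{i,t}, sr i = s_{i,r}
  (empty outside the node set [0:N+1]).\<close>
type_synonym state = "(nat \<Rightarrow> nat set) \<times> (nat \<Rightarrow> nat set)"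

definition states :: "mode \<Rightarrow> nat \<Rightarrow> state set" where
  "states m N = {(st, sr).
     (\<forall>i. i \<le> N + 1 \<longrightarrow>
          st i \<subseteq> {1..N+1} - {i} \<and> card (st i) \<le> 1 \<and>
          sr i \<subseteq> {0..N} - {i} \<and> card (sr i) \<le> 1) \<and>
     (\<forall>i. i > N + 1 \<longrightarrow> st i = {} \<and> sr i = {}) \<and>
     sr 0 = {} \<and> st (N + 1) = {} \<and>
     (m = HD \<longrightarrow> (\<forall>i\<in>{1..N}. card (st i) + card (sr i) \<le> 1))}"

definition active :: "state \<Rightarrow> nat \<Rightarrow> nat \<Rightarrow> bool" where
  "active s i j \<longleftrightarrow> j \<in> fst s i \<and> i \<in> snd s j"

definition cut_value :: "mode \<Rightarrow> nat \<Rightarrow> (nat \<Rightarrow> real) \<Rightarrow> (nat \<Rightarrow> real) \<Rightarrow> (state \<Rightarrow> real) \<Rightarrow> nat set \<Rightarrow> real" where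
  "cut_value m N a b lam \<Omega> =
     (\<Sum>i\<in>\<Omega>. \<Sum>j\<in>{0..N+1} - \<Omega>.
        (\<Sum>s\<in>{s\<in>states m N. active s i j}. lam s) * ell N a b j i)"

definition cuts :: "nat \<Rightarrow> nat set set" where
  "cuts N = {\<Omega>. 0 \<in> \<Omega> \<and> \<Omega> \<subseteq> {0..N}}"

definition prob_vec :: "mode \<Rightarrow> nat \<Rightarrow> (state \<Rightarrow> real) \<Rightarrow> bool" where
  "prob_vec m N lam \<longleftrightarrow> (\<forall>s\<in>states m N. lam s \<ge> 0) \<and> (\<Sum>s\<in>states m N. lam s) = 1"

text \<open>C_cs,iid = max over probability vectors of min over cuts; the max is
  attained (continuous function on a compact simplex), so Sup = max.\<close>
definition Ccs :: "mode \<Rightarrow> nat \<Rightarrow> (nat \<Rightarrow> real) \<Rightarrow> (nat \<Rightarrow> real) \<Rightarrow> real" where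
  "Ccs m N a b = Sup {Min ((cut_value m N a b lam) ` cuts N) | lam. prob_vec m N lam}"

end

theory Submission
  imports Defs
begin

text \<open>Upper bound: for a schedule \<lambda>, put relay p on the source side of the cut exactly when
  its outgoing link carries less than its incoming one. The cut then collects, for each
  relay, min (x_p a_p) (y_p b_p), where x_p and y_p are the fractions of time its two links are
  active; this is at most (x_p + y_p) C_p, and since the source talks to one relay and the
  destination listens to one relay at a time, \<Sum>x_p \<le> 1 and \<Sum>y_p \<le> 1.
  Tightness: with a = (K, 1) and b = (1, K), alternate between "source \<rightarrow> 1 and 2 \<rightarrow> destination"
  (time 1/K) and "source \<rightarrow> 2 and 1 \<rightarrow> destination"; every cut then carries at least
  2 - 2/K, while every C_p is at most 1.\<close>

lemma finite_states: "finite (states m N)"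
proof -
  let ?F = "{f::nat \<Rightarrow> nat set. \<forall>x. (x \<in> {0..N+1} \<longrightarrow> f x \<in> Pow {0..N+1}) \<and>
                                     (x \<notin> {0..N+1} \<longrightarrow> f x = {})}"
  have "finite ?F" by (rule finite_set_of_finite_funs) auto
  moreover have "states m N \<subseteq> ?F \<times> ?F" unfolding states_def by fastforce
  ultimately show ?thesis by (meson finite_SigmaI finite_subset)
qed

lemma finite_cuts: "finite (cuts N)"
  by (rule finite_subset[of _ "Pow {0..N}"]) (auto simp: cuts_def)

lemma singleton_source_in_cuts: "{0} \<in> cuts N"
  unfolding cuts_def by auto

lemma states_transmit_finite_card_le_1:
  assumes "s \<in> states m N"
  shows "finite (fst s i) \<and> card (fst s i) \<le> 1"
  using assms by (cases s; cases "i \<le> N + 1") (auto simp: states_def intro: finite_subset)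

lemma states_receive_finite_card_le_1:
  assumes "s \<in> states m N"
  shows "finite (snd s j) \<and> card (snd s j) \<le> 1"
  using assms by (cases s; cases "j \<le> N + 1") (auto simp: states_def intro: finite_subset)

definition link_time :: "mode \<Rightarrow> nat \<Rightarrow> (state \<Rightarrow> real) \<Rightarrow> nat \<Rightarrow> nat \<Rightarrow> real" where
  "link_time m N lam i j = (\<Sum>s\<in>{s\<in>states m N. active s i j}. lam s)"

lemma link_time_nonneg: "prob_vec m N lam \<Longrightarrow> link_time m N lam i j \<ge> 0"
  unfolding link_time_def prob_vec_def by (auto intro: sum_nonneg)

lemma sum_sum_filter_le_sum:
  fixes lam :: "'s \<Rightarrow> real"
  assumes "finite S" "finite P" "\<forall>s\<in>S. lam s \<ge> 0" "\<forall>s\<in>S. card {p\<in>P. Q s p} \<le> 1"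
  shows "(\<Sum>p\<in>P. \<Sum>s\<in>{s\<in>S. Q s p}. lam s) \<le> (\<Sum>s\<in>S. lam s)"
proof -
  have "(\<Sum>p\<in>P. \<Sum>s\<in>{s\<in>S. Q s p}. lam s) = (\<Sum>s\<in>S. \<Sum>p\<in>P. if Q s p then lam s else 0)"
    using assms(1) by (simp add: sum.inter_filter sum.swap[of _ P])
  also have "\<dots> \<le> (\<Sum>s\<in>S. lam s)"
  proof (rule sum_mono)
    fix s assume s: "s \<in> S"
    have "(\<Sum>p\<in>P. if Q s p then lam s else 0) = real (card {p\<in>P. Q s p}) * lam s"
      using assms(2) by (simp add: sum.inter_filter[symmetric])
    also have "\<dots> \<le> lam s"
      using assms(3,4) s by (simp add: mult_left_le_one_le)
    finally show "(\<Sum>p\<in>P. if Q s p then lam s else 0) \<le> lam s" .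
  qed
  finally show ?thesis .
qed

lemma sum_link_time_from_le_1:
  assumes "prob_vec m N lam" "finite P"
  shows "(\<Sum>j\<in>P. link_time m N lam i j) \<le> 1"
proof -
  have "(\<Sum>j\<in>P. link_time m N lam i j) \<le> (\<Sum>s\<in>states m N. lam s)"
    unfolding link_time_def
  proof (rule sum_sum_filter_le_sum)
    show "\<forall>s\<in>states m N. card {j\<in>P. active s i j} \<le> 1"
    proof
      fix s assume "s \<in> states m N"
      moreover have "{j\<in>P. active s i j} \<subseteq> fst s i" by (auto simp: active_def)
      ultimately show "card {j\<in>P. active s i j} \<le> 1"
        using states_transmit_finite_card_le_1 card_mono le_trans by metis
    qed
  qed (use assms in \<open>auto simp: finite_states prob_vec_def\<close>)
  thus ?thesis using assms(1) by (simp add: prob_vec_def)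
qed

lemma sum_link_time_to_le_1:
  assumes "prob_vec m N lam" "finite P"
  shows "(\<Sum>i\<in>P. link_time m N lam i j) \<le> 1"
proof -
  have "(\<Sum>i\<in>P. link_time m N lam i j) \<le> (\<Sum>s\<in>states m N. lam s)"
    unfolding link_time_def
  proof (rule sum_sum_filter_le_sum)
    show "\<forall>s\<in>states m N. card {i\<in>P. active s i j} \<le> 1"
    proof
      fix s assume "s \<in> states m N"
      moreover have "{i\<in>P. active s i j} \<subseteq> snd s j" by (auto simp: active_def)
      ultimately show "card {i\<in>P. active s i j} \<le> 1"
        using states_receive_finite_card_le_1 card_mono le_trans by metis
    qed
  qed (use assms in \<open>auto simp: finite_states prob_vec_def\<close>)
  thus ?thesis using assms(1) by (simp add: prob_vec_def)
qed

lemma cut_value_diamond: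
  assumes "\<Omega> \<in> cuts N"
  shows "cut_value m N a b lam \<Omega> =
    (\<Sum>p\<in>{1..N}. if p \<in> \<Omega> then link_time m N lam p (N+1) * b p else link_time m N lam 0 p * a p)"
proof -
  let ?f = "\<lambda>i. \<Sum>j\<in>{0..N+1} - \<Omega>. link_time m N lam i j * ell N a b j i"
  have O0: "0 \<in> \<Omega>" and Osub: "\<Omega> \<subseteq> {0..N}" using assms unfolding cuts_def by auto
  have "cut_value m N a b lam \<Omega> = ?f 0 + (\<Sum>i\<in>\<Omega> - {0}. ?f i)"
    unfolding cut_value_def link_time_def
    using sum.remove[OF finite_subset[OF Osub finite_atLeastAtMost] O0] by simp
  also have "?f 0 = (\<Sum>j\<in>{0..N+1} - \<Omega>. if j \<in> {1..N} then link_time m N lam 0 j * a j else 0)"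
    by (rule sum.cong) (auto simp: ell_def)
  also have "\<dots> = (\<Sum>p\<in>({0..N+1} - \<Omega>) \<inter> {1..N}. link_time m N lam 0 p * a p)"
    by (simp add: sum.inter_restrict)
  also have "({0..N+1} - \<Omega>) \<inter> {1..N} = {1..N} \<inter> - \<Omega>" by auto
  also have "\<Omega> - {0} = {1..N} \<inter> \<Omega>" using Osub by auto
  also have "(\<Sum>i\<in>{1..N} \<inter> \<Omega>. ?f i) = (\<Sum>p\<in>{1..N} \<inter> \<Omega>. link_time m N lam p (N+1) * b p)"
  proof (rule sum.cong)
    fix i assume i: "i \<in> {1..N} \<inter> \<Omega>"
    have "?f i = (\<Sum>j\<in>{0..N+1} - \<Omega>. if j = N+1 then link_time m N lam i (N+1) * b i else 0)"
      by (rule sum.cong) (use i in \<open>auto simp: ell_def\<close>)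
    also have "\<dots> = link_time m N lam i (N+1) * b i" using Osub by (subst sum.delta) auto
    finally show "?f i = link_time m N lam i (N+1) * b i" .
  qed simp
  finally show ?thesis
    by (simp add: sum.If_cases Int_commute add.commute)
qed

lemma min_le_time_share_Cp:
  fixes x y :: real
  assumes "x \<ge> 0" "y \<ge> 0" "a p > 0" "b p > 0"
  shows "min (x * a p) (y * b p) \<le> (x + y) * Cp m a b p"
proof (cases m)
  case FD
  have "min (x * a p) (y * b p) \<le> x * min (a p) (b p) + y * min (a p) (b p)"
    using assms by (auto simp: min_def mult_left_mono algebra_simps
        intro: add_increasing2 add_increasing mult_nonneg_nonneg)
  thus ?thesis using FD by (simp add: Cp_def algebra_simps)
next
  case HD
  have "a p * min (x * a p) (y * b p) \<le> a p * (y * b p)"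
    and "b p * min (x * a p) (y * b p) \<le> b p * (x * a p)"
    using assms by (simp_all add: mult_left_mono)
  hence "(a p + b p) * min (x * a p) (y * b p) \<le> b p * (x * a p) + a p * (y * b p)"
    by (simp add: distrib_right)
  also have "\<dots> = (x + y) * (a p * b p)" by (simp add: algebra_simps)
  finally show ?thesis
    using HD assms by (simp add: Cp_def pos_le_divide_eq mult.commute)
qed

lemma Min_cut_le_twice_Max_Cp:
  assumes vd: "valid_diamond N a b" and pv: "prob_vec m N lam"
  shows "Min (cut_value m N a b lam ` cuts N) \<le> 2 * Max (Cp m a b ` {1..N})"
proof -
  define M where "M = Max (Cp m a b ` {1..N})"
  define x where "x p = link_time m N lam 0 p" for p
  define y where "y p = link_time m N lam p (N+1)" for p
  have pos: "a p > 0" "b p > 0" if "p \<in> {1..N}" for p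
    using vd that unfolding valid_diamond_def by auto
  have Cp_le_M: "Cp m a b p \<le> M" if "p \<in> {1..N}" for p
    unfolding M_def using that by (intro Max_ge) auto
  have one: "1 \<in> {1..N}" using vd by (simp add: valid_diamond_def)
  have "0 < Cp m a b 1" using pos[OF one] by (cases m) (simp_all add: Cp_def)
  hence M_nonneg: "M \<ge> 0" using Cp_le_M[OF one] by simp
  have xy_nonneg: "x p \<ge> 0" "y p \<ge> 0" for p
    unfolding x_def y_def using link_time_nonneg[OF pv] by auto
  let ?\<Omega> = "insert 0 {p\<in>{1..N}. y p * b p \<le> x p * a p}"
  have cut: "?\<Omega> \<in> cuts N" unfolding cuts_def by auto
  have "Min (cut_value m N a b lam ` cuts N) \<le> cut_value m N a b lam ?\<Omega>"
    using cut finite_cuts by (intro Min_le) auto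
  also have "\<dots> = (\<Sum>p\<in>{1..N}. min (x p * a p) (y p * b p))"
    unfolding cut_value_diamond[OF cut] x_def[symmetric] y_def[symmetric]
    by (rule sum.cong) auto
  also have "\<dots> \<le> (\<Sum>p\<in>{1..N}. (x p + y p) * M)"
  proof (rule sum_mono)
    fix p assume p: "p \<in> {1..N}"
    have "min (x p * a p) (y p * b p) \<le> (x p + y p) * Cp m a b p"
      using xy_nonneg pos[OF p] by (rule min_le_time_share_Cp)
    also have "\<dots> \<le> (x p + y p) * M"
      using Cp_le_M[OF p] xy_nonneg by (intro mult_left_mono) auto
    finally show "min (x p * a p) (y p * b p) \<le> (x p + y p) * M" .
  qed
  also have "\<dots> = (\<Sum>p\<in>{1..N}. x p) * M + (\<Sum>p\<in>{1..N}. y p) * M"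
    by (simp add: sum.distrib sum_distrib_right distrib_right)
  also have "\<dots> \<le> 1 * M + 1 * M"
    unfolding x_def y_def using pv M_nonneg
    by (intro add_mono mult_right_mono sum_link_time_from_le_1 sum_link_time_to_le_1) auto
  finally show ?thesis unfolding M_def by simp
qed

lemma bdd_above_min_cuts:
  assumes "valid_diamond N a b"
  shows "bdd_above {Min (cut_value m N a b lam ` cuts N) | lam. prob_vec m N lam}"
  unfolding bdd_above_def using Min_cut_le_twice_Max_Cp[OF assms] by blast

lemma prob_vec_ex: "\<exists>lam. prob_vec m N lam"
proof -
  have "(\<lambda>_. {}, \<lambda>_. {}) \<in> states m N" unfolding states_def by auto
  hence "prob_vec m N (\<lambda>s. if s = (\<lambda>_. {}, \<lambda>_. {}) then 1 else 0)"
    unfolding prob_vec_def using finite_states by (simp add: sum.delta')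
  thus ?thesis by blast
qed

lemma Ccs_le_twice_Max_Cp:
  assumes "valid_diamond N a b"
  shows "Ccs m N a b \<le> 2 * Max (Cp m a b ` {1..N})"
  unfolding Ccs_def using prob_vec_ex[of m N] Min_cut_le_twice_Max_Cp[OF assms]
  by (intro cSup_least) auto

lemma Min_cut_le_Ccs:
  assumes "valid_diamond N a b" "prob_vec m N lam"
  shows "Min (cut_value m N a b lam ` cuts N) \<le> Ccs m N a b"
  unfolding Ccs_def using assms bdd_above_min_cuts[OF assms(1)]
  by (intro cSup_upper) auto

text \<open>In the two-relay network node 3 is the destination: the source feeds relay p
  while relay q forwards to the destination.\<close>
definition feed_forward_state :: "nat \<Rightarrow> nat \<Rightarrow> state" where
  "feed_forward_state p q =
     ((\<lambda>i. if i = 0 then {p} else if i = q then {3} else {}),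
      (\<lambda>i. if i = p then {0} else if i = 3 then {q} else {}))"

lemma feed_forward_state_in_states:
  "p \<in> {1,2} \<Longrightarrow> q \<in> {1,2} \<Longrightarrow> p \<noteq> q \<Longrightarrow> feed_forward_state p q \<in> states m 2"
  unfolding states_def feed_forward_state_def by auto

definition alternating_schedule :: "real \<Rightarrow> state \<Rightarrow> real" where
  "alternating_schedule w s =
     (if s = feed_forward_state 1 2 then w else 0) + (if s = feed_forward_state 2 1 then 1 - w else 0)"

lemma prob_vec_alternating_schedule:
  assumes "0 \<le> w" "w \<le> 1"
  shows "prob_vec m 2 (alternating_schedule w)"
proof -
  have "feed_forward_state 1 2 \<noteq> feed_forward_state 2 1"
    by (auto simp: feed_forward_state_def fun_eq_iff)
  thus ?thesis
    using assms finite_states feed_forward_state_in_states[of 1 2 m] feed_forward_state_in_states[of 2 1 m]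
    by (auto simp: prob_vec_def alternating_schedule_def sum.distrib sum.delta')
qed

lemma link_time_alternating_schedule:
  "link_time m 2 (alternating_schedule w) i j =
     (if active (feed_forward_state 1 2) i j then w else 0) +
     (if active (feed_forward_state 2 1) i j then 1 - w else 0)"
  using finite_states[of m 2] feed_forward_state_in_states[of 1 2 m] feed_forward_state_in_states[of 2 1 m]
  by (simp add: link_time_def alternating_schedule_def sum.distrib sum.delta')

lemma Ccs_tight_example_ge:
  assumes "K \<ge> 1" "K \<in> \<rat>"
  shows "2 - 2 / K \<le> Ccs m 2 (\<lambda>p. if p = 1 then K else 1) (\<lambda>p. if p = 2 then K else 1)"
    (is "_ \<le> Ccs m 2 ?a ?b")
proof -
  let ?lam = "alternating_schedule (1 / K)"
  have vd: "valid_diamond 2 ?a ?b" using assms by (auto simp: valid_diamond_def)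
  have "2 - 2 / K \<le> cut_value m 2 ?a ?b ?lam \<Omega>" if "\<Omega> \<in> cuts 2" for \<Omega>
  proof -
    have "{1..2::nat} = {1, 2}" by auto
    moreover have "link_time m 2 ?lam 0 1 = 1 / K" "link_time m 2 ?lam 0 2 = 1 - 1 / K"
      "link_time m 2 ?lam 1 3 = 1 - 1 / K" "link_time m 2 ?lam 2 3 = 1 / K"
      by (simp_all add: link_time_alternating_schedule active_def feed_forward_state_def)
    ultimately show ?thesis
      unfolding cut_value_diamond[OF that] using assms(1) by (simp add: divide_right_mono)
  qed
  hence "2 - 2 / K \<le> Min (cut_value m 2 ?a ?b ?lam ` cuts 2)"
    using finite_cuts singleton_source_in_cuts by (intro Min.boundedI) auto
  also have "\<dots> \<le> Ccs m 2 ?a ?b"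
    using vd prob_vec_alternating_schedule assms(1) by (intro Min_cut_le_Ccs) auto
  finally show ?thesis .
qed

lemma Max_Cp_tight_example_le_1:
  assumes "K \<ge> 1"
  shows "Max (Cp m (\<lambda>p. if p = 1 then K else 1) (\<lambda>p. if p = 2 then K else 1) ` {1..2}) \<le> 1"
  using assms by (intro Max.boundedI) (auto simp: Cp_def split: mode.split)

lemma half_ratio_tight:
  assumes "\<epsilon> > 0"
  shows "\<exists>a b. valid_diamond 2 a b \<and> Max (Cp m a b ` {1..2}) \<le> (1/2 + \<epsilon>) * Ccs m 2 a b"
proof -
  obtain n :: nat where n: "1 / \<epsilon> + 1 < n" using reals_Archimedean2 by blast
  define K where "K = real n"
  define a where "a p = (if p = 1 then K else 1)" for p :: nat
  define b where "b p = (if p = 2 then K else 1)" for p :: nat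
  have "0 < 1 / \<epsilon>" using assms by simp
  hence "1 < real n" using n by linarith
  hence K: "K \<ge> 1" "K \<in> \<rat>" unfolding K_def by auto
  have "1 \<le> 1 + 2 * \<epsilon> - (1 + 2 * \<epsilon>) / K"
  proof -
    have "1 + \<epsilon> < \<epsilon> * K" using n assms by (simp add: K_def field_simps)
    thus ?thesis using K(1) assms by (simp add: divide_le_eq)
  qed
  also have "\<dots> = (1/2 + \<epsilon>) * (2 - 2 / K)" using K(1) by (simp add: field_simps)
  also have "\<dots> \<le> (1/2 + \<epsilon>) * Ccs m 2 a b"
    unfolding a_def b_def using K assms by (intro mult_left_mono Ccs_tight_example_ge) auto
  finally have "Max (Cp m a b ` {1..2}) \<le> (1/2 + \<epsilon>) * Ccs m 2 a b"
    using Max_Cp_tight_example_le_1[where m = m, OF K(1)] unfolding a_def b_def by linarith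
  moreover have "valid_diamond 2 a b" using K by (auto simp: valid_diamond_def a_def b_def)
  ultimately show ?thesis by blast
qed

theorem lemma5:
  shows "\<forall>m :: mode.
     (\<forall>N a b. valid_diamond N a b \<longrightarrow>
        Max (Cp m a b ` {1..N}) \<ge> 1/2 * Ccs m N a b) \<and>
     (\<forall>\<epsilon>::real. \<epsilon> > 0 \<longrightarrow>
        (\<exists>a b. valid_diamond 2 a b \<and>
           Max (Cp m a b ` {1..2}) \<le> (1/2 + \<epsilon>) * Ccs m 2 a b))"
proof (intro allI conjI impI)
  fix m N a b assume "valid_diamond N a b"
  from Ccs_le_twice_Max_Cp[OF this, of m]
  show "Max (Cp m a b ` {1..N}) \<ge> 1/2 * Ccs m N a b" by simp
next
  fix m and \<epsilon> :: real assume "\<epsilon> > 0"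
  from half_ratio_tight[OF this, of m]
  show "\<exists>a b. valid_diamond 2 a b \<and> Max (Cp m a b ` {1..2}) \<le> (1/2 + \<epsilon>) * Ccs m 2 a b" .
qed

end
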